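(* Let $(\phi_n)_{n\ge1}$ be a sequence of inner functions satisfying $\phi_n(0) \neq 0$, and let $f_n = T(\phi_n)$. The following are equivalent: (a) the product $\prod_{n \geq 1} \phi_n(0)$ converges absolutely; (b) the product $\prod_{n \geq 1} \phi_n$ converges absolutely and locally uniformly on $\mathbb{D}$; (c) the product $\prod_{n \geq 1} f_n(0)$ converges absolutely; (d) the product $\prod_{n \geq 1} f_n$ converges absolutely and locally uniformly on $\mathbb{D}$.
   Context: $\mathbb{D}$ is the open unit disk. $T(z) = i\frac{1-iz}{1+iz}$, and $T(\phi)=T\circ\phi$ (it is implicitly assumed that no $\phi_n$ is the constant $i$, so that $f_n$ is defined). A product $\prod w_n$ of numbers converges absolutely if $\sum|1-w_n|<\infty$; a product of functions converges absolutely and locally uniformly on $\mathbb{D}$ if $\sum|1-w_n(z)|$ converges uniformly on compact subsets of $\mathbb{D}$. *)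

theory Defs
  imports "HOL-Analysis.Analysis"
begin

definition inner_function :: "(complex \<Rightarrow> complex) \<Rightarrow> bool" where
  "inner_function f \<longleftrightarrow>
     f holomorphic_on ball 0 1 \<and>
     (\<forall>z\<in>ball 0 1. norm (f z) \<le> 1) \<and>
     (AE \<theta> in lborel. \<theta> \<in> {0..2*pi} \<longrightarrow>
        (\<exists>L. norm L = 1 \<and> ((\<lambda>r. f (complex_of_real r * cis \<theta>)) \<longlongrightarrow> L) (at_left 1)))"

definition T :: "complex \<Rightarrow> complex" where
  "T z = \<i> * (1 - \<i> * z) / (1 + \<i> * z)"

definition abs_conv_prod :: "(nat \<Rightarrow> complex) \<Rightarrow> bool" where
  "abs_conv_prod w \<longleftrightarrow> summable (\<lambda>n. norm (1 - w n))"

definition abs_loc_unif_conv_prod :: "(nat \<Rightarrow> complex \<Rightarrow> complex) \<Rightarrow> bool" where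
  "abs_loc_unif_conv_prod w \<longleftrightarrow>
     (\<forall>K. compact K \<and> K \<subseteq> ball 0 1 \<longrightarrow>
        uniformly_convergent_on K (\<lambda>N z. \<Sum>n<N. norm (1 - w n z)))"

end

theory Submission
  imports Defs "HOL-Complex_Analysis.Complex_Analysis"
begin

text \<open>Composing \<open>\<phi>\<^sub>n\<close> with the disk automorphism sending \<open>\<phi>\<^sub>n(0)\<close> to \<open>0\<close> and applying
  Schwarz's lemma gives the Harnack-type estimate \<open>|1 - \<phi>\<^sub>n(z)| \<le> (1+r)/(1-r) |1 - \<phi>\<^sub>n(0)|\<close>
  for \<open>|z| \<le> r\<close>, so (a) implies (b) by the Weierstrass M-test. The map \<open>T\<close> fixes \<open>1\<close> and
  \<open>|1 - T w|\<close> is comparable to \<open>|1 - w|\<close> on the closed disk near \<open>1\<close>, which gives the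
  equivalence with (c) and (d).\<close>

lemma self_map_disk_constant_or_norm_less_1:
  fixes g :: "complex \<Rightarrow> complex"
  assumes hol: "g holomorphic_on ball 0 1" and bd: "\<And>z. z \<in> ball 0 1 \<Longrightarrow> norm (g z) \<le> 1"
  shows "g constant_on ball 0 1 \<or> (\<forall>z\<in>ball 0 1. norm (g z) < 1)"
proof (rule disjCI)
  assume "\<not> (\<forall>z\<in>ball 0 1. norm (g z) < 1)"
  then obtain w where w: "w \<in> ball 0 1" "norm (g w) = 1"
    using bd by (meson le_less)
  show "g constant_on ball 0 1"
    by (rule maximum_modulus_principle[OF hol _ _ _ order.refl w(1)]) (use bd w in auto)
qed

lemma norm_one_minus_le_Moebius:
  fixes a b :: complex
  assumes a: "norm a < 1" and b: "norm b < 1"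
  shows "norm (1 - b) \<le> norm (1 - a) + norm ((b - a) / (1 - cnj a * b)) * (norm (1 - a) + norm (1 - b))"
proof -
  define h where "h = (b - a) / (1 - cnj a * b)"
  have "norm (cnj a * b) < 1"
    using mult_strict_mono'[OF a b norm_ge_zero norm_ge_zero] by (simp add: norm_mult)
  then have "1 - cnj a * b \<noteq> 0"
    by auto
  then have "1 - b = (1 - a) - h * ((1 - cnj a) + cnj a * (1 - b))"
    by (simp add: h_def field_simps)
  then have "norm (1 - b) \<le> norm (1 - a) + norm (h * ((1 - cnj a) + cnj a * (1 - b)))"
    by (metis norm_triangle_ineq4)
  also have "\<dots> \<le> norm (1 - a) + norm h * (norm (1 - cnj a) + norm (cnj a) * norm (1 - b))"
    unfolding norm_mult[of h]
    by (intro add_left_mono mult_left_mono) (auto intro: order_trans[OF norm_triangle_ineq] simp: norm_mult)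
  also have "\<dots> \<le> norm (1 - a) + norm h * (norm (1 - a) + norm (1 - b))"
    using a complex_mod_cnj[of "1 - a"]
    by (intro add_left_mono mult_left_mono) (auto simp: mult_left_le_one_le)
  finally show ?thesis
    by (simp add: h_def)
qed

lemma self_map_disk_harnack:
  fixes g :: "complex \<Rightarrow> complex"
  assumes hol: "g holomorphic_on ball 0 1" and bd: "\<And>z. z \<in> ball 0 1 \<Longrightarrow> norm (g z) \<le> 1"
    and z: "norm z \<le> r" and r: "r < 1"
  shows "(1 - r) * norm (1 - g z) \<le> (1 + r) * norm (1 - g 0)"
proof -
  have r0: "0 \<le> r"
    using z norm_ge_zero[of z] by linarith
  have zb: "z \<in> ball 0 1"
    using z r by simp
  consider "g constant_on ball 0 1" | "\<forall>w\<in>ball 0 1. norm (g w) < 1"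
    using self_map_disk_constant_or_norm_less_1[OF hol bd] by blast
  then show ?thesis
  proof cases
    case 1
    then have "g z = g 0"
      using zb unfolding constant_on_def by auto
    then show ?thesis
      using r0 by (simp add: mult_right_mono)
  next
    case 2
    define a where "a = g 0"
    have a1: "norm a < 1"
      using 2 by (simp add: a_def)
    define h where "h = Moebius_function 0 a \<circ> g"
    have "h holomorphic_on ball 0 1"
      unfolding h_def
      by (rule holomorphic_on_compose_gen[OF hol Moebius_function_holomorphic[OF a1]]) (use 2 in auto)
    moreover have "h 0 = 0"
      by (simp add: h_def a_def Moebius_function_eq_zero)
    moreover have "norm (h w) < 1" if "norm w < 1" for w
      unfolding h_def o_def by (rule Moebius_function_norm_lt_1[OF a1]) (use 2 that in simp)
    ultimately have "norm (h z) \<le> norm z"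
      using zb by (intro Schwarz_Lemma(1)) auto
    then have hz: "norm (h z) \<le> r"
      using z by simp
    have "norm (1 - g z) \<le> norm (1 - a) + norm (h z) * (norm (1 - a) + norm (1 - g z))"
      using norm_one_minus_le_Moebius[OF a1, of "g z"] 2 zb
      by (simp add: h_def Moebius_function_simple)
    also have "\<dots> \<le> norm (1 - a) + r * (norm (1 - a) + norm (1 - g z))"
      using hz by (intro add_left_mono mult_right_mono) simp_all
    finally show ?thesis
      by (simp add: a_def algebra_simps)
  qed
qed

lemma compact_subset_ball_bounded_norm:
  fixes K :: "'a::real_normed_vector set"
  assumes "compact K" "K \<subseteq> ball 0 R"
  obtains r where "r < R" "\<And>z. z \<in> K \<Longrightarrow> norm z \<le> r"
proof (cases "K = {}")
  case True
  then show ?thesis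
    using that[of "R - 1"] by simp
next
  case False
  obtain x where "x \<in> K" "\<forall>y\<in>K. norm y \<le> norm x"
    using continuous_attains_sup[OF assms(1) False, of norm] continuous_on_norm_id by blast
  then show ?thesis
    using assms(2) that[of "norm x"] by auto
qed

lemma self_map_disk_harnack_compact:
  assumes "compact K" "K \<subseteq> ball 0 1"
  obtains C :: real where
    "\<And>g z. g holomorphic_on ball 0 1 \<Longrightarrow> (\<And>w. w \<in> ball 0 1 \<Longrightarrow> norm (g w) \<le> 1) \<Longrightarrow> z \<in> K
      \<Longrightarrow> norm (1 - g z) \<le> C * norm (1 - g 0)"
proof -
  obtain r where r: "r < 1" "\<And>z. z \<in> K \<Longrightarrow> norm z \<le> r"
    using compact_subset_ball_bounded_norm[OF assms] by metis
  show ?thesis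
  proof (rule that[of "(1 + r) / (1 - r)"])
    fix g z assume "g holomorphic_on ball 0 1" "\<And>w. w \<in> ball 0 1 \<Longrightarrow> norm (g w) \<le> 1" "z \<in> K"
    then have "(1 - r) * norm (1 - g z) \<le> (1 + r) * norm (1 - g 0)"
      using r by (intro self_map_disk_harnack) auto
    then show "norm (1 - g z) \<le> (1 + r) / (1 - r) * norm (1 - g 0)"
      using r by (simp add: field_simps)
  qed
qed

lemma one_minus_T: "1 + \<i> * w \<noteq> 0 \<Longrightarrow> 1 - T w = (1 - \<i>) * (1 - w) / (1 + \<i> * w)"
  by (simp add: T_def field_simps)

lemma norm_one_minus_T:
  assumes "1 + \<i> * w \<noteq> 0"
  shows "norm (1 - T w) = sqrt 2 * norm (1 - w) / norm (1 + \<i> * w)"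
proof -
  have "norm (1 - \<i>) = sqrt 2"
    by (simp add: cmod_def)
  then show ?thesis
    using assms by (simp add: one_minus_T norm_mult norm_divide)
qed

lemma norm_one_minus_le_norm_one_minus_T:
  assumes "norm w \<le> 1"
  shows "norm (1 - w) \<le> 2 * norm (1 - T w)"
proof (cases "1 + \<i> * w = 0")
  case True
  \<comment> \<open>\<open>w = \<i>\<close>, where \<open>T\<close> takes the junk value \<open>0\<close>\<close>
  then have "w = \<i>"
    by (simp add: complex_eq_iff)
  moreover have "sqrt 2 \<le> (2::real)"
    by (rule real_le_lsqrt) auto
  ultimately show ?thesis
    by (simp add: T_def cmod_def)
next
  case False
  have "norm (1 - w) * norm (1 + \<i> * w) \<le> norm (1 - w) * 2"
    using norm_triangle_ineq[of 1 "\<i> * w"] assms by (intro mult_left_mono) (simp_all add: norm_mult)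
  also have "\<dots> \<le> 2 * (sqrt 2 * norm (1 - w))"
    using mult_right_mono[of 1 "sqrt 2" "norm (1 - w)"] by simp
  finally show ?thesis
    using False by (simp add: norm_one_minus_T pos_le_divide_eq)
qed

lemma norm_one_minus_T_le:
  assumes "norm (1 - w) \<le> 1/2"
  shows "norm (1 - T w) \<le> 3 * norm (1 - w)"
proof -
  have "1 + \<i> * w = (1 + \<i>) - \<i> * (1 - w)"
    by (simp add: algebra_simps)
  then have "norm (1 + \<i>) - norm (\<i> * (1 - w)) \<le> norm (1 + \<i> * w)"
    by (metis norm_triangle_ineq2)
  moreover have "norm (1 + \<i>) = sqrt 2"
    by (simp add: cmod_def)
  moreover have "1.4 \<le> sqrt (2::real)"
    by (rule real_le_rsqrt) (simp add: power2_eq_square)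
  ultimately have d: "9/10 \<le> norm (1 + \<i> * w)"
    using assms by (simp add: norm_mult)
  have "sqrt (2::real) \<le> 3/2"
    by (rule real_le_lsqrt) (auto simp: power2_eq_square)
  then have "sqrt 2 * norm (1 - w) \<le> 3 * norm (1 - w) * (9/10)"
    using mult_right_mono[of "sqrt 2" "3/2" "norm (1 - w)"] norm_ge_zero[of "1 - w"] by linarith
  also have "\<dots> \<le> 3 * norm (1 - w) * norm (1 + \<i> * w)"
    using d by (intro mult_left_mono) simp_all
  finally have "sqrt 2 * norm (1 - w) \<le> 3 * norm (1 - w) * norm (1 + \<i> * w)" .
  moreover have "1 + \<i> * w \<noteq> 0"
    using d by auto
  ultimately show ?thesis
    using d by (simp add: norm_one_minus_T pos_divide_le_eq)
qed

lemma abs_loc_unif_conv_prod_imp_abs_conv_prod_at_0: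
  assumes "abs_loc_unif_conv_prod w"
  shows "abs_conv_prod (\<lambda>n. w n 0)"
proof -
  have "uniformly_convergent_on {0} (\<lambda>N z. \<Sum>n<N. norm (1 - w n z))"
    using assms unfolding abs_loc_unif_conv_prod_def by auto
  from uniformly_convergent_imp_convergent[OF this, of 0]
  show ?thesis
    by (simp add: abs_conv_prod_def summable_iff_convergent)
qed

lemma abs_loc_unif_conv_prod_dominated:
  assumes "abs_conv_prod a"
    and "\<And>K. compact K \<Longrightarrow> K \<subseteq> ball 0 1 \<Longrightarrow>
      \<exists>C. \<forall>\<^sub>F n in sequentially. \<forall>z\<in>K. norm (1 - w n z) \<le> C * norm (1 - a n)"
  shows "abs_loc_unif_conv_prod w"
  unfolding abs_loc_unif_conv_prod_def
proof (intro allI impI)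
  fix K :: "complex set"
  assume "compact K \<and> K \<subseteq> ball 0 1"
  then obtain C where C: "\<forall>\<^sub>F n in sequentially. \<forall>z\<in>K. norm (1 - w n z) \<le> C * norm (1 - a n)"
    using assms(2) by blast
  have "summable (\<lambda>n. C * norm (1 - a n))"
    using assms(1) unfolding abs_conv_prod_def by (rule summable_mult)
  moreover have "\<forall>\<^sub>F n in sequentially. \<forall>z\<in>K. norm (norm (1 - w n z)) \<le> C * norm (1 - a n)"
    using C by simp
  ultimately show "uniformly_convergent_on K (\<lambda>N z. \<Sum>n<N. norm (1 - w n z))"
    by (intro Weierstrass_m_test'_ev)
qed

lemma abs_conv_prod_eventually_small:
  assumes "abs_conv_prod a" "0 < \<epsilon>"
  shows "\<forall>\<^sub>F n in sequentially. C * norm (1 - a n) < \<epsilon>"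
proof -
  have "(\<lambda>n. C * norm (1 - a n)) \<longlonglongrightarrow> C * 0"
    using assms(1) unfolding abs_conv_prod_def
    by (intro tendsto_mult tendsto_const summable_LIMSEQ_zero)
  then show ?thesis
    using assms(2) by (intro order_tendstoD(2)) simp_all
qed

lemma abs_conv_prod_T_iff:
  assumes "\<And>n. norm (a n) \<le> 1"
  shows "abs_conv_prod (\<lambda>n. T (a n)) \<longleftrightarrow> abs_conv_prod a"
  unfolding abs_conv_prod_def
proof
  assume Ta: "summable (\<lambda>n. norm (1 - T (a n)))"
  have "norm (norm (1 - a n)) \<le> 2 * norm (1 - T (a n))" for n
    using norm_one_minus_le_norm_one_minus_T[OF assms] by simp
  then show "summable (\<lambda>n. norm (1 - a n))"
    by (intro summable_comparison_test_ev[OF always_eventually summable_mult[OF Ta]]) blast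
next
  assume a: "summable (\<lambda>n. norm (1 - a n))"
  then have "\<forall>\<^sub>F n in sequentially. 1 * norm (1 - a n) < 1/2"
    by (intro abs_conv_prod_eventually_small) (simp_all add: abs_conv_prod_def)
  then have "\<forall>\<^sub>F n in sequentially. norm (norm (1 - T (a n))) \<le> 3 * norm (1 - a n)"
    by eventually_elim (simp add: norm_one_minus_T_le)
  then show "summable (\<lambda>n. norm (1 - T (a n)))"
    by (rule summable_comparison_test_ev[OF _ summable_mult[OF a]])
qed

lemma abs_loc_unif_conv_prod_self_maps_disk:
  assumes hol: "\<And>n. \<phi> n holomorphic_on ball 0 1"
    and bd: "\<And>n z. z \<in> ball 0 1 \<Longrightarrow> norm (\<phi> n z) \<le> 1"
    and a: "abs_conv_prod (\<lambda>n. \<phi> n 0)"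
  shows "abs_loc_unif_conv_prod \<phi>"
proof (rule abs_loc_unif_conv_prod_dominated[OF a])
  fix K :: "complex set" assume "compact K" "K \<subseteq> ball 0 1"
  then obtain C where "\<And>n z. z \<in> K \<Longrightarrow> norm (1 - \<phi> n z) \<le> C * norm (1 - \<phi> n 0)"
    using self_map_disk_harnack_compact hol bd by metis
  then show "\<exists>C. \<forall>\<^sub>F n in sequentially. \<forall>z\<in>K. norm (1 - \<phi> n z) \<le> C * norm (1 - \<phi> n 0)"
    by (intro exI always_eventually) blast
qed

lemma abs_loc_unif_conv_prod_T_self_maps_disk:
  assumes hol: "\<And>n. \<phi> n holomorphic_on ball 0 1"
    and bd: "\<And>n z. z \<in> ball 0 1 \<Longrightarrow> norm (\<phi> n z) \<le> 1"
    and a: "abs_conv_prod (\<lambda>n. \<phi> n 0)"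
  shows "abs_loc_unif_conv_prod (\<lambda>n z. T (\<phi> n z))"
proof (rule abs_loc_unif_conv_prod_dominated[OF a])
  fix K :: "complex set" assume "compact K" "K \<subseteq> ball 0 1"
  then obtain C where C: "\<And>n z. z \<in> K \<Longrightarrow> norm (1 - \<phi> n z) \<le> C * norm (1 - \<phi> n 0)"
    using self_map_disk_harnack_compact hol bd by metis
  have "\<forall>\<^sub>F n in sequentially. C * norm (1 - \<phi> n 0) < 1/2"
    using abs_conv_prod_eventually_small[OF a, of "1/2"] by simp
  then have "\<forall>\<^sub>F n in sequentially. \<forall>z\<in>K. norm (1 - T (\<phi> n z)) \<le> (3 * C) * norm (1 - \<phi> n 0)"
  proof eventually_elim
    case (elim n)
    show ?case
    proof
      fix z assume "z \<in> K"
      then have "norm (1 - \<phi> n z) \<le> C * norm (1 - \<phi> n 0)"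
        by (rule C)
      moreover from this have "norm (1 - T (\<phi> n z)) \<le> 3 * norm (1 - \<phi> n z)"
        using elim by (simp add: norm_one_minus_T_le)
      ultimately show "norm (1 - T (\<phi> n z)) \<le> (3 * C) * norm (1 - \<phi> n 0)"
        by linarith
    qed
  qed
  then show "\<exists>C. \<forall>\<^sub>F n in sequentially. \<forall>z\<in>K. norm (1 - T (\<phi> n z)) \<le> C * norm (1 - \<phi> n 0)" ..
qed

theorem lemma4p3:
  fixes \<phi> f :: "nat \<Rightarrow> complex \<Rightarrow> complex"
  assumes inner: "\<And>n. inner_function (\<phi> n)"
    and nz: "\<And>n. \<phi> n 0 \<noteq> 0"
    and not_i: "\<And>n. \<not> (\<forall>z\<in>ball 0 1. \<phi> n z = \<i>)"
    and f_def: "\<And>n z. f n z = T (\<phi> n z)"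
  shows "(abs_conv_prod (\<lambda>n. \<phi> n 0) \<longleftrightarrow> abs_loc_unif_conv_prod \<phi>)
       \<and> (abs_loc_unif_conv_prod \<phi> \<longleftrightarrow> abs_conv_prod (\<lambda>n. f n 0))
       \<and> (abs_conv_prod (\<lambda>n. f n 0) \<longleftrightarrow> abs_loc_unif_conv_prod f)"
proof -
  have hol: "\<And>n. \<phi> n holomorphic_on ball 0 1"
    and bd: "\<And>n z. z \<in> ball 0 1 \<Longrightarrow> norm (\<phi> n z) \<le> 1"
    using inner unfolding inner_function_def by auto
  have f_eq: "f = (\<lambda>n z. T (\<phi> n z))"
    using f_def by blast
  have c_iff_a: "abs_conv_prod (\<lambda>n. T (\<phi> n 0)) \<longleftrightarrow> abs_conv_prod (\<lambda>n. \<phi> n 0)"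
    using bd by (intro abs_conv_prod_T_iff) simp
  show ?thesis
    unfolding f_eq
    using c_iff_a abs_loc_unif_conv_prod_self_maps_disk[of \<phi>, OF hol bd]
      abs_loc_unif_conv_prod_T_self_maps_disk[of \<phi>, OF hol bd]
      abs_loc_unif_conv_prod_imp_abs_conv_prod_at_0[of \<phi>]
      abs_loc_unif_conv_prod_imp_abs_conv_prod_at_0[of "\<lambda>n z. T (\<phi> n z)"]
    by blast
qed

end
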